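(* Let $\alpha>1$ and $f\in\mathcal{B}_1(\alpha)$. Then for every $r\in(0,1)$ and all real $\theta_1<\theta_2$, writing $z=re^{i\theta}$, \[ \int_{\theta_1}^{\theta_2}\left[\operatorname{Re}\left(1+\frac{zf''(z)}{f'(z)}\right)+(\alpha-1)\operatorname{Re}\left(\frac{zf'(z)}{f(z)}\right)\right]d\theta>-\pi, \] i.e. $\int_{\theta_1}^{\theta_2}\operatorname{Re}P[\alpha,f](re^{i\theta})\,d\theta>-\pi$.
   Context: $\mathbb{D}$ is the unit disk, $\mathcal{A}$ the class of analytic $f$ in $\mathbb{D}$ with $f(z)=z+\sum_{n\ge2}a_nz^n$, and $\mathcal{P}$ the class of analytic $h$ in $\mathbb{D}$ with $h(0)=1$, $\operatorname{Re}h>0$. For $\alpha>0$, $\mathcal{B}_1(\alpha)$ is the class of functions $f(z)=\left[\alpha\int_0^z t^{\alpha-1}h(t)\,dt\right]^{1/\alpha}$ with $h\in\mathcal{P}$ (principal powers), equivalently $f\in\mathcal{A}$ with $\operatorname{Re}\left[\left(\frac{f(z)}{z}\right)^{\alpha-1}f'(z)\right]>0$ in $\mathbb{D}$. For $f\in\mathcal{A}$, $P[\alpha,f](z)=1+\frac{zf''(z)}{f'(z)}+(\alpha-1)\frac{zf'(z)}{f(z)}$. *)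

theory Defs
  imports "HOL-Analysis.Analysis"
begin

definition classA :: "(complex \<Rightarrow> complex) set" where
  "classA = {f. f holomorphic_on ball 0 1 \<and> f 0 = 0 \<and> deriv f 0 = 1}"

text \<open>The class B_1(alpha): f in A with Re[(f(z)/z)^(alpha-1) f'(z)] > 0 in the disk,
  where (f(z)/z)^(alpha-1) is the analytic branch equal to 1 at z = 0, i.e.
  exp((alpha-1) g(z)) for the analytic logarithm g of f(z)/z with g(0)=0.\<close>
definition B1 :: "real \<Rightarrow> (complex \<Rightarrow> complex) set" where
  "B1 \<alpha> = {f. f \<in> classA \<and>
     (\<exists>g. g holomorphic_on ball 0 1 \<and> g 0 = 0 \<and>
          (\<forall>z\<in>ball 0 1. f z = z * exp (g z)) \<and>
          (\<forall>z\<in>ball 0 1. 0 < Re (exp (complex_of_real (\<alpha> - 1) * g z) * deriv f z)))}"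

definition Pop :: "real \<Rightarrow> (complex \<Rightarrow> complex) \<Rightarrow> complex \<Rightarrow> complex" where
  "Pop \<alpha> f z = 1 + z * deriv (deriv f) z / deriv f z
                 + complex_of_real (\<alpha> - 1) * (z * deriv f z / f z)"

end

theory Submission
  imports Defs "HOL-Complex_Analysis.Cauchy_Integral_Formula"
begin

text \<open>With \<open>h = (f/z)\<^sup>\<alpha>\<^sup>-\<^sup>1 f'\<close>, which has positive real part on the disk, one has
  \<open>P[\<alpha>,f](z) = \<alpha> + z h'(z)/h(z)\<close>. Along the circle \<open>z = r e\<^sup>i\<^sup>\<theta>\<close> the quantity
  \<open>Re (z h'/h)\<close> is the \<open>\<theta>\<close>-derivative of \<open>arg h(z)\<close>, so the integral equals
  \<open>\<alpha>(\<theta>\<^sub>2 - \<theta>\<^sub>1) + arg h(z\<^sub>2) - arg h(z\<^sub>1)\<close>. Since \<open>|arg h| < \<pi>/2\<close>, this exceeds \<open>-\<pi>\<close>.\<close>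

lemma Pop_eq_of_real_plus_logderiv:
  fixes \<alpha> :: real and f g :: "complex \<Rightarrow> complex"
  defines "h \<equiv> \<lambda>w. exp (complex_of_real (\<alpha> - 1) * g w) * deriv f w"
  assumes "open S" and "f holomorphic_on S" and "g holomorphic_on S"
    and f_eq: "\<And>w. w \<in> S \<Longrightarrow> f w = w * exp (g w)"
    and "z \<in> S" and "z \<noteq> 0" and "deriv f z \<noteq> 0"
  shows "Pop \<alpha> f z = complex_of_real \<alpha> + z * deriv h z / h z"
proof -
  define c where "c = complex_of_real (\<alpha> - 1)"
  have Dg: "(g has_field_derivative deriv g z) (at z)"
    using assms holomorphic_derivI by blast
  have Df': "(deriv f has_field_derivative deriv (deriv f) z) (at z)"
    using assms holomorphic_derivI holomorphic_deriv by blast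
  have "((\<lambda>w. w * exp (g w)) has_field_derivative exp (g z) + z * (deriv g z * exp (g z))) (at z)"
    by (auto intro!: derivative_eq_intros Dg)
  then have "(f has_field_derivative exp (g z) + z * (deriv g z * exp (g z))) (at z)"
    using assms by (auto intro: has_field_derivative_transform_within_open)
  then have deriv_f: "deriv f z = exp (g z) + z * (deriv g z * exp (g z))"
    by (rule DERIV_imp_deriv)
  have "(h has_field_derivative
          c * deriv g z * exp (c * g z) * deriv f z + exp (c * g z) * deriv (deriv f) z) (at z)"
    unfolding h_def c_def[symmetric] by (auto intro!: derivative_eq_intros Dg Df')
  moreover have "h z = exp (c * g z) * deriv f z"
    by (simp add: h_def c_def)
  ultimately have "z * deriv h z / h z = c * (z * deriv g z) + z * deriv (deriv f) z / deriv f z"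
    using \<open>deriv f z \<noteq> 0\<close> by (simp add: DERIV_imp_deriv field_simps)
  moreover have "z * deriv f z / f z = 1 + z * deriv g z"
    using f_eq[OF \<open>z \<in> S\<close>] deriv_f \<open>z \<noteq> 0\<close> by (simp add: field_simps)
  ultimately show ?thesis
    by (simp add: Pop_def c_def algebra_simps)
qed

lemma has_integral_logderiv_Ln:
  fixes h :: "complex \<Rightarrow> complex" and \<gamma> \<gamma>' :: "real \<Rightarrow> complex"
  assumes "open S" and "h holomorphic_on S" and Re_pos: "\<And>w. w \<in> S \<Longrightarrow> 0 < Re (h w)"
    and "a \<le> b" and \<gamma>_in: "\<And>t. t \<in> {a..b} \<Longrightarrow> \<gamma> t \<in> S"
    and D\<gamma>: "\<And>t. t \<in> {a..b} \<Longrightarrow> (\<gamma> has_vector_derivative \<gamma>' t) (at t within {a..b})"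
  shows "((\<lambda>t. \<gamma>' t * deriv h (\<gamma> t) / h (\<gamma> t)) has_integral
           Ln (h (\<gamma> b)) - Ln (h (\<gamma> a))) {a..b}"
proof (rule fundamental_theorem_of_calculus[OF \<open>a \<le> b\<close>])
  fix t assume t: "t \<in> {a..b}"
  have "h (\<gamma> t) \<notin> \<real>\<^sub>\<le>\<^sub>0"
    using Re_pos[OF \<gamma>_in[OF t]] by (auto simp: complex_nonpos_Reals_iff)
  moreover have "(h has_field_derivative deriv h (\<gamma> t)) (at (\<gamma> t))"
    using assms \<gamma>_in[OF t] holomorphic_derivI by blast
  ultimately have "(Ln \<circ> h has_field_derivative deriv h (\<gamma> t) / h (\<gamma> t)) (at (\<gamma> t))"
    by (auto intro!: derivative_eq_intros simp: o_def field_simps)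
  then have "(Ln \<circ> h has_field_derivative deriv h (\<gamma> t) / h (\<gamma> t)) (at (\<gamma> t) within \<gamma> ` {a..b})"
    by (rule has_field_derivative_at_within)
  from field_vector_diff_chain_within[OF D\<gamma>[OF t] this]
  show "((\<lambda>t. Ln (h (\<gamma> t))) has_vector_derivative \<gamma>' t * deriv h (\<gamma> t) / h (\<gamma> t))
          (at t within {a..b})"
    by (simp add: o_def)
qed

lemma has_vector_derivative_circle:
  "((\<lambda>t. complex_of_real r * exp (\<i> * complex_of_real t)) has_vector_derivative
      \<i> * (complex_of_real r * exp (\<i> * complex_of_real t))) (at t within T)"
proof -
  have "(complex_of_real has_vector_derivative 1) (at t within T)"
    using has_vector_derivative_of_real[OF DERIV_ident] by simp
  moreover have "((\<lambda>w. complex_of_real r * exp (\<i> * w)) has_field_derivative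
      complex_of_real r * (exp (\<i> * complex_of_real t) * \<i>)) (at (complex_of_real t))"
    by (auto intro!: derivative_eq_intros)
  ultimately show ?thesis
    using field_vector_diff_chain_within has_field_derivative_at_within
    by (fastforce simp: o_def algebra_simps)
qed

lemma has_integral_Re_Pop_circle:
  fixes \<alpha> r a b :: real and f g :: "complex \<Rightarrow> complex"
  defines "h \<equiv> \<lambda>w. exp (complex_of_real (\<alpha> - 1) * g w) * deriv f w"
    and "\<gamma> \<equiv> \<lambda>t. complex_of_real r * exp (\<i> * complex_of_real t)"
  assumes f_holo: "f holomorphic_on ball 0 1" and g_holo: "g holomorphic_on ball 0 1"
    and f_eq: "\<And>w. w \<in> ball 0 1 \<Longrightarrow> f w = w * exp (g w)"
    and Re_pos: "\<And>w. w \<in> ball 0 1 \<Longrightarrow> 0 < Re (h w)"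
    and "0 < r" and "r < 1" and "a \<le> b"
  shows "((\<lambda>t. Re (Pop \<alpha> f (\<gamma> t))) has_integral
           \<alpha> * (b - a) + (Im (Ln (h (\<gamma> b))) - Im (Ln (h (\<gamma> a))))) {a..b}"
proof -
  have \<gamma>_in: "\<gamma> t \<in> ball 0 1" and \<gamma>_nz: "\<gamma> t \<noteq> 0" for t
    using \<open>0 < r\<close> \<open>r < 1\<close> by (simp_all add: \<gamma>_def norm_mult)
  have "h holomorphic_on ball 0 1"
    unfolding h_def using f_holo g_holo by (auto intro!: holomorphic_intros)
  then have "((\<lambda>t. \<i> * \<gamma> t * deriv h (\<gamma> t) / h (\<gamma> t)) has_integral
               Ln (h (\<gamma> b)) - Ln (h (\<gamma> a))) {a..b}"
    using \<open>a \<le> b\<close> \<gamma>_in Re_pos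
    by (intro has_integral_logderiv_Ln) (auto simp: \<gamma>_def has_vector_derivative_circle)
  from has_integral_linear[OF this bounded_linear_Im]
  have "((\<lambda>t. Re (\<gamma> t * deriv h (\<gamma> t) / h (\<gamma> t))) has_integral
           Im (Ln (h (\<gamma> b))) - Im (Ln (h (\<gamma> a)))) {a..b}"
    by (simp add: o_def mult.assoc flip: times_divide_eq_right)
  from has_integral_add[OF has_integral_const_real[where c = \<alpha> and a = a and b = b] this]
  have "((\<lambda>t. \<alpha> + Re (\<gamma> t * deriv h (\<gamma> t) / h (\<gamma> t))) has_integral
           \<alpha> * (b - a) + (Im (Ln (h (\<gamma> b))) - Im (Ln (h (\<gamma> a))))) {a..b}"
    using \<open>a \<le> b\<close> by (simp add: mult.commute)
  moreover have "Pop \<alpha> f (\<gamma> t) = complex_of_real \<alpha> + \<gamma> t * deriv h (\<gamma> t) / h (\<gamma> t)" for t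
  proof -
    have "deriv f (\<gamma> t) \<noteq> 0"
      using Re_pos[OF \<gamma>_in[of t]] by (auto simp: h_def)
    from Pop_eq_of_real_plus_logderiv[OF open_ball f_holo g_holo f_eq \<gamma>_in \<gamma>_nz this]
    show ?thesis
      unfolding h_def .
  qed
  ultimately show ?thesis
    by (simp only: plus_complex.sel Re_complex_of_real)
qed

theorem mainTheorem3:
  fixes \<alpha> r \<theta>1 \<theta>2 :: real and f :: "complex \<Rightarrow> complex"
  assumes "\<alpha> > 1" and "f \<in> B1 \<alpha>" and "0 < r" and "r < 1" and "\<theta>1 < \<theta>2"
  shows "integral {\<theta>1..\<theta>2} (\<lambda>\<theta>. Re (Pop \<alpha> f (complex_of_real r * exp (\<i> * complex_of_real \<theta>)))) > - pi"
proof -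
  from \<open>f \<in> B1 \<alpha>\<close> obtain g where f_holo: "f holomorphic_on ball 0 1"
    and g_holo: "g holomorphic_on ball 0 1"
    and f_eq: "\<And>w. w \<in> ball 0 1 \<Longrightarrow> f w = w * exp (g w)"
    and Re_pos: "\<And>w. w \<in> ball 0 1 \<Longrightarrow> 0 < Re (exp (complex_of_real (\<alpha> - 1) * g w) * deriv f w)"
    unfolding B1_def classA_def by blast
  define h where "h = (\<lambda>w. exp (complex_of_real (\<alpha> - 1) * g w) * deriv f w)"
  define \<gamma> where "\<gamma> = (\<lambda>t. complex_of_real r * exp (\<i> * complex_of_real t))"
  have "((\<lambda>t. Re (Pop \<alpha> f (\<gamma> t))) has_integral
          \<alpha> * (\<theta>2 - \<theta>1) + (Im (Ln (h (\<gamma> \<theta>2))) - Im (Ln (h (\<gamma> \<theta>1))))) {\<theta>1..\<theta>2}"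
    unfolding h_def \<gamma>_def using Re_pos \<open>0 < r\<close> \<open>r < 1\<close> \<open>\<theta>1 < \<theta>2\<close>
    by (intro has_integral_Re_Pop_circle[OF f_holo g_holo f_eq]) auto
  then have integral_eq: "integral {\<theta>1..\<theta>2} (\<lambda>t. Re (Pop \<alpha> f (\<gamma> t)))
      = \<alpha> * (\<theta>2 - \<theta>1) + (Im (Ln (h (\<gamma> \<theta>2))) - Im (Ln (h (\<gamma> \<theta>1))))"
    by (rule integral_unique)
  have arg_bound: "\<bar>Im (Ln (h (\<gamma> t)))\<bar> < pi / 2" for t
    using Re_Ln_pos_lt_imp Re_pos[of "\<gamma> t"] \<open>0 < r\<close> \<open>r < 1\<close>
    by (simp add: h_def \<gamma>_def norm_mult)
  have "0 < \<alpha> * (\<theta>2 - \<theta>1)"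
    using \<open>\<alpha> > 1\<close> \<open>\<theta>1 < \<theta>2\<close> by simp
  then have "integral {\<theta>1..\<theta>2} (\<lambda>t. Re (Pop \<alpha> f (\<gamma> t))) > - pi"
    using integral_eq arg_bound[of \<theta>1] arg_bound[of \<theta>2] by linarith
  then show ?thesis
    by (simp add: \<gamma>_def)
qed

end
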